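(* For any integers $k\ge1$ and $N\ge1$, there exist real numbers $a,b$ such that every term of the generalized $k$-FL sequence $\{S^{(a,b)}_{k,n}\}_{n\ge0}$ is an integer and $|\mathcal{Z}(\{S^{(a,b)}_{k,n}\}_{n\ge0})|\ge N$.
   Context: For real $k,a,b$, the generalized $k$-FL sequence is $S^{(a,b)}_{k,0}=2b$, $S^{(a,b)}_{k,1}=bk+a$, $S^{(a,b)}_{k,n}=kS^{(a,b)}_{k,n-1}+S^{(a,b)}_{k,n-2}$ ($n\ge2$). For an integer sequence $\mathcal{A}=\{a_n\}_{n\ge0}$, a prime $p$ is a primitive prime divisor for $a_n$ if $p\mid a_n$ but $p\nmid a_m$ for all $0\le m<n$ with $a_m\neq0$; the Zsigmondy set is $\mathcal{Z}(\mathcal{A})=\{n\ge0: a_n \text{ has no primitive prime divisor}\}$, and $|S|$ denotes cardinality. *)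

theory Defs
  imports Complex_Main "HOL-Computational_Algebra.Primes"
begin

fun kFL :: "real \<Rightarrow> real \<Rightarrow> real \<Rightarrow> nat \<Rightarrow> real" where
  "kFL k a b 0 = 2 * b"
| "kFL k a b (Suc 0) = b * k + a"
| "kFL k a b (Suc (Suc n)) = k * kFL k a b (Suc n) + kFL k a b n"

definition primitive_prime_divisor :: "(nat \<Rightarrow> int) \<Rightarrow> nat \<Rightarrow> int \<Rightarrow> bool" where
  "primitive_prime_divisor A n p \<longleftrightarrow>
     prime p \<and> p dvd A n \<and> (\<forall>m<n. A m \<noteq> 0 \<longrightarrow> \<not> p dvd A m)"

definition zsigmondy_set :: "(nat \<Rightarrow> int) \<Rightarrow> nat set" where
  "zsigmondy_set A = {n. \<not> (\<exists>p. primitive_prime_divisor A n p)}"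

end

theory Submission
  imports Defs
begin

text \<open>Take \<open>b = 0\<close>: then \<open>S\<^sub>n = a U\<^sub>n\<close> with \<open>U\<close> the \<open>k\<close>-Fibonacci sequence \<open>U\<^sub>0 = 0\<close>,
  \<open>U\<^sub>1 = 1\<close>. Choosing \<open>a = U\<^sub>1 \<cdots> U\<^sub>N\<^sub>+\<^sub>1\<close> makes \<open>S\<^sub>n = a U\<^sub>n\<close> divide \<open>a\<^sup>2 = S\<^sub>1\<^sup>2\<close> for
  \<open>2 \<le> n \<le> N + 1\<close>, so every prime factor of \<open>S\<^sub>n\<close> already divides the nonzero term \<open>S\<^sub>1\<close>,
  and these \<open>N\<close> indices lie in the Zsigmondy set.\<close>

fun k_fib :: "int \<Rightarrow> nat \<Rightarrow> int" where
  "k_fib k 0 = 0"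
| "k_fib k (Suc 0) = 1"
| "k_fib k (Suc (Suc n)) = k * k_fib k (Suc n) + k_fib k n"

lemma kFL_zero_eq_k_fib: "kFL (of_int k) (of_int a) 0 n = of_int (a * k_fib k n)"
  by (induction k n rule: k_fib.induct) (simp_all add: algebra_simps)

lemma k_fib_nonneg_and_Suc_pos:
  assumes "k \<ge> 1"
  shows "k_fib k n \<ge> 0 \<and> k_fib k (Suc n) > 0"
proof (induction n)
  case (Suc n)
  then have "k * k_fib k (Suc n) > 0" using assms by simp
  with Suc show ?case by simp
qed simp

lemma k_fib_nonzero: "k \<ge> 1 \<Longrightarrow> n \<ge> 1 \<Longrightarrow> k_fib k n \<noteq> 0"
  using k_fib_nonneg_and_Suc_pos[of k "n - 1"] by simp

lemma in_zsigmondy_setI: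
  assumes "m < n" and "A m \<noteq> 0" and "A n dvd A m ^ j"
  shows "n \<in> zsigmondy_set A"
  unfolding zsigmondy_set_def primitive_prime_divisor_def
proof clarify
  fix p :: int
  assume "prime p" "p dvd A n" "\<forall>m<n. A m \<noteq> 0 \<longrightarrow> \<not> p dvd A m"
  moreover have "p dvd A m"
    using \<open>prime p\<close> \<open>p dvd A n\<close> assms(3) prime_dvd_power dvd_trans by blast
  ultimately show False using assms(1,2) by blast
qed

theorem theorem4p7:
  fixes k N :: int
  assumes "k \<ge> 1" and "N \<ge> 1"
  shows "\<exists>a b :: real.
           (\<forall>n. kFL (of_int k) a b n \<in> \<int>) \<and>
           (infinite (zsigmondy_set (\<lambda>n. \<lfloor>kFL (of_int k) a b n\<rfloor>)) \<or>
            N \<le> int (card (zsigmondy_set (\<lambda>n. \<lfloor>kFL (of_int k) a b n\<rfloor>))))"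
proof -
  define P where "P = (\<Prod>j\<in>{1..nat N + 1}. k_fib k j)"
  define A where "A n = \<lfloor>kFL (of_int k) (of_int P) 0 n\<rfloor>" for n
  have A_eq: "A n = P * k_fib k n" for n
    unfolding A_def kFL_zero_eq_k_fib by (simp only: floor_of_int)
  have "P \<noteq> 0"
    unfolding P_def using k_fib_nonzero[OF assms(1)] by simp
  have "{2..nat N + 1} \<subseteq> zsigmondy_set A"
  proof
    fix n assume n: "n \<in> {2..nat N + 1}"
    then have "k_fib k n dvd P" unfolding P_def by (intro dvd_prodI) auto
    then have "A n dvd A 1 ^ 2" by (simp add: A_eq power2_eq_square)
    then show "n \<in> zsigmondy_set A"
      using n \<open>P \<noteq> 0\<close> by (intro in_zsigmondy_setI[of 1]) (auto simp: A_eq)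
  qed
  then have "infinite (zsigmondy_set A) \<or> card {2..nat N + 1} \<le> card (zsigmondy_set A)"
    using card_mono by blast
  then have "infinite (zsigmondy_set A) \<or> N \<le> int (card (zsigmondy_set A))"
    using assms(2) by auto
  moreover have "\<forall>n. kFL (of_int k) (of_int P) 0 n \<in> \<int>"
    unfolding kFL_zero_eq_k_fib by simp
  ultimately show ?thesis unfolding A_def by blast
qed

end
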